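(* Let $\pi\ge1$ and $c:=\sup_{g\in\mathcal G}\dfrac{g'(0)}{g(\hat v_g)/\hat v_g}$, where $\hat v_g$ is the smallest maximizer of $g$ over $[0,\Delta]$. For every input $\sigma=(g_1,\dots,g_T)\in\Sigma$ and every $t\in[T]$, the output of CR-Pursuit($\pi$) satisfies $$\bar v_t\le c\,\frac{g_t(\bar v_t)}{p(t)},\qquad p(t)=g_t'(0).$$
   Context: Fix $\Delta>0$ and $0<m\le M$. Let $\mathcal G$ be the family of all functions $g:[0,\Delta]\to\mathbb{R}$ that are concave, increasing and differentiable on $[0,\Delta]$ with $g(0)=0$ and $g'(0)\in[m,M]$. An input is a finite sequence $\sigma=(g_1,\dots,g_T)$, $T\ge1$, $g_t\in\mathcal G$; $\Sigma$ is the set of all inputs; $\sigma^{[1:t]}=(g_1,\dots,g_t)$ ($\sigma^{[1:0]}$ empty). $\eta_{OPT}(\sigma^{[1:t]})$ is the optimal value of $\max\sum_{s=1}^t g_s(v_s)$ s.t. $\sum_{s=1}^t v_s\le\Delta$, $v_s\ge0$ (and $0$ for the empty sequence). For $\pi\ge1$, CR-Pursuit($\pi$) outputs at time $t$ the smallest $\bar v_t\in[0,\Delta]$ with $g_t(\bar v_t)=\frac1\pi\big[\eta_{OPT}(\sigma^{[1:t]})-\eta_{OPT}(\sigma^{[1:t-1]})\big]$. *)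

theory Defs
  imports "HOL-Analysis.Analysis"
begin

definition dg0 :: "real \<Rightarrow> (real \<Rightarrow> real) \<Rightarrow> real" where
  "dg0 \<Delta> g = (THE d. (g has_real_derivative d) (at 0 within {0..\<Delta>}))"

definition inG :: "real \<Rightarrow> real \<Rightarrow> real \<Rightarrow> (real \<Rightarrow> real) \<Rightarrow> bool" where
  "inG \<Delta> m M g \<longleftrightarrow>
     concave_on {0..\<Delta>} g \<and> mono_on {0..\<Delta>} g \<and> g differentiable_on {0..\<Delta>} \<and>
     g 0 = 0 \<and> dg0 \<Delta> g \<in> {m..M}"

definition vhat :: "real \<Rightarrow> (real \<Rightarrow> real) \<Rightarrow> real" where
  "vhat \<Delta> g = (LEAST v. v \<in> {0..\<Delta>} \<and> (\<forall>u\<in>{0..\<Delta>}. g u \<le> g v))"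

definition eta_opt :: "real \<Rightarrow> (real \<Rightarrow> real) list \<Rightarrow> real" where
  "eta_opt \<Delta> gs = Sup {(\<Sum>s<length gs. (gs ! s) (v s)) | v.
       (\<forall>s<length gs. 0 \<le> v s) \<and> (\<Sum>s<length gs. v s) \<le> \<Delta>}"

text \<open>Output of CR-Pursuit(pi) at (1-based) time t on input gs.\<close>
definition cr_pursuit :: "real \<Rightarrow> real \<Rightarrow> (real \<Rightarrow> real) list \<Rightarrow> nat \<Rightarrow> real" where
  "cr_pursuit \<Delta> \<pi> gs t = (LEAST v. v \<in> {0..\<Delta>} \<and>
      (gs ! (t - 1)) v = (1 / \<pi>) * (eta_opt \<Delta> (take t gs) - eta_opt \<Delta> (take (t - 1) gs)))"

text \<open>The constant c (possibly infinite, hence extended real).\<close>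
definition c_const :: "real \<Rightarrow> real \<Rightarrow> real \<Rightarrow> ereal" where
  "c_const \<Delta> m M = (SUP g \<in> {g. inG \<Delta> m M g}. ereal (dg0 \<Delta> g / (g (vhat \<Delta> g) / vhat \<Delta> g)))"

end

theory Submission
  imports Defs
begin

text \<open>
  The increment of the offline optimum caused by the current function g lies between 0 and
  g(\<Delta>), so the level pursued by CR-Pursuit is attained on [0,\<Delta>] and its smallest preimage v
  does not exceed the smallest maximizer vhat of g. Concavity together with g(0) = 0 makes
  g(x)/x non-increasing, hence v \<le> vhat \<cdot> g(v) / g(vhat), and the right-hand side is the ratio
  defining c, evaluated at g, times g(v)/g'(0).
\<close>

lemma closed_Least:
  fixes P :: "real \<Rightarrow> bool"
  assumes "closed {x. P x}" and "P a" and "bdd_below {x. P x}"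
  shows "P (LEAST x. P x)" and "\<And>y. P y \<Longrightarrow> (LEAST x. P x) \<le> y"
proof -
  have Inf_mem: "P (Inf {x. P x})"
    using closed_contains_Inf[of "{x. P x}"] assms by blast
  have Least_eq: "(LEAST x. P x) = Inf {x. P x}"
    by (rule Least_equality) (use Inf_mem assms(3) in \<open>auto intro: cInf_lower\<close>)
  show "P (LEAST x. P x)" using Inf_mem by (simp add: Least_eq)
  show "(LEAST x. P x) \<le> y" if "P y" for y
    using that assms(3) by (simp add: Least_eq cInf_lower)
qed

definition alloc_values :: "real \<Rightarrow> (real \<Rightarrow> real) list \<Rightarrow> real set" where
  "alloc_values \<Delta> gs = {(\<Sum>s<length gs. (gs ! s) (v s)) | v.
       (\<forall>s<length gs. 0 \<le> v s) \<and> (\<Sum>s<length gs. v s) \<le> \<Delta>}"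

lemma eta_opt_eq_Sup_alloc_values: "eta_opt \<Delta> gs = Sup (alloc_values \<Delta> gs)"
  by (simp add: eta_opt_def alloc_values_def)

lemma alloc_values_nonempty: "0 \<le> \<Delta> \<Longrightarrow> alloc_values \<Delta> gs \<noteq> {}"
  by (auto simp: alloc_values_def intro!: exI[of _ "\<lambda>_. 0"])

lemma bdd_above_alloc_values:
  assumes "\<forall>h\<in>set gs. mono_on {0..\<Delta>} h"
  shows "bdd_above (alloc_values \<Delta> gs)"
  unfolding bdd_above_def
proof (intro exI[of _ "\<Sum>s<length gs. (gs ! s) \<Delta>"] ballI)
  fix x assume "x \<in> alloc_values \<Delta> gs"
  then obtain v where x: "x = (\<Sum>s<length gs. (gs ! s) (v s))"
    and nonneg: "\<forall>s<length gs. 0 \<le> v s" and total: "(\<Sum>s<length gs. v s) \<le> \<Delta>"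
    by (auto simp: alloc_values_def)
  have "v s \<le> \<Delta>" if "s < length gs" for s
    using member_le_sum[of s "{..<length gs}" v] that nonneg total by auto
  then have "(gs ! s) (v s) \<le> (gs ! s) \<Delta>" if "s < length gs" for s
    using that nonneg assms by (intro mono_onD[of "{0..\<Delta>}" "gs ! s"]) force+
  then show "x \<le> (\<Sum>s<length gs. (gs ! s) \<Delta>)"
    unfolding x by (intro sum_mono) auto
qed

lemma eta_opt_snoc_bounds:
  assumes "0 \<le> \<Delta>" and mono: "\<forall>h\<in>set (gs @ [g]). mono_on {0..\<Delta>} h" and "g 0 = 0"
  shows "eta_opt \<Delta> gs \<le> eta_opt \<Delta> (gs @ [g])"
    and "eta_opt \<Delta> (gs @ [g]) \<le> eta_opt \<Delta> gs + g \<Delta>"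
proof -
  let ?n = "length gs"
  have nth_snoc: "\<And>s f. (\<Sum>s<?n. ((gs @ [g]) ! s) (f s)) = (\<Sum>s<?n. (gs ! s) (f s))"
    by (rule sum.cong) (auto simp: nth_append)
  have bdd: "bdd_above (alloc_values \<Delta> gs)" "bdd_above (alloc_values \<Delta> (gs @ [g]))"
    using bdd_above_alloc_values[of gs] bdd_above_alloc_values[OF mono] mono by auto
  show "eta_opt \<Delta> gs \<le> eta_opt \<Delta> (gs @ [g])"
    unfolding eta_opt_eq_Sup_alloc_values
  proof (rule cSup_least)
    show "alloc_values \<Delta> gs \<noteq> {}" using assms(1) by (rule alloc_values_nonempty)
    fix x assume "x \<in> alloc_values \<Delta> gs"
    then obtain v where x: "x = (\<Sum>s<?n. (gs ! s) (v s))"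
      and "\<forall>s<?n. 0 \<le> v s" "(\<Sum>s<?n. v s) \<le> \<Delta>"
      by (auto simp: alloc_values_def)
    \<comment> \<open>the new function receives nothing\<close>
    moreover have "(\<Sum>s<?n. (v(?n := 0)) s) = (\<Sum>s<?n. v s)"
      "(\<Sum>s<?n. (gs ! s) ((v(?n := 0)) s)) = (\<Sum>s<?n. (gs ! s) (v s))"
      by (auto intro: sum.cong)
    ultimately have "x \<in> alloc_values \<Delta> (gs @ [g])"
      unfolding alloc_values_def using \<open>g 0 = 0\<close> nth_snoc
      by (auto intro!: exI[of _ "v(?n := 0)"] simp: less_Suc_eq)
    then show "x \<le> Sup (alloc_values \<Delta> (gs @ [g]))" using bdd(2) by (rule cSup_upper)
  qed
  show "eta_opt \<Delta> (gs @ [g]) \<le> eta_opt \<Delta> gs + g \<Delta>"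
    unfolding eta_opt_eq_Sup_alloc_values
  proof (rule cSup_least)
    show "alloc_values \<Delta> (gs @ [g]) \<noteq> {}" using assms(1) by (rule alloc_values_nonempty)
    fix x assume "x \<in> alloc_values \<Delta> (gs @ [g])"
    then obtain v where x: "x = (\<Sum>s<?n. (gs ! s) (v s)) + g (v ?n)"
      and nonneg: "\<forall>s<Suc ?n. 0 \<le> v s" and total: "(\<Sum>s<?n. v s) + v ?n \<le> \<Delta>"
      by (auto simp: alloc_values_def nth_snoc)
    have "(\<Sum>s<?n. v s) \<ge> 0" using nonneg by (intro sum_nonneg) simp
    then have "(\<Sum>s<?n. (gs ! s) (v s)) \<in> alloc_values \<Delta> gs"
      using nonneg total unfolding alloc_values_def by force
    then have "(\<Sum>s<?n. (gs ! s) (v s)) \<le> Sup (alloc_values \<Delta> gs)"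
      using bdd(1) by (rule cSup_upper)
    moreover have "g (v ?n) \<le> g \<Delta>"
      using mono nonneg total \<open>(\<Sum>s<?n. v s) \<ge> 0\<close>
      by (intro mono_onD[of "{0..\<Delta>}" g]) auto
    ultimately show "x \<le> Sup (alloc_values \<Delta> gs) + g \<Delta>" unfolding x by linarith
  qed
qed

context
  fixes \<Delta> :: real and g :: "real \<Rightarrow> real"
  assumes \<Delta>_nonneg: "0 \<le> \<Delta>"
    and g_cont: "continuous_on {0..\<Delta>} g" and g_mono: "mono_on {0..\<Delta>} g"
begin

lemma closed_level_set: "closed {v. v \<in> {0..\<Delta>} \<and> g v \<in> A}" if "closed A"
proof -
  have "{v. v \<in> {0..\<Delta>} \<and> g v \<in> A} = {0..\<Delta>} \<inter> g -` A" by auto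
  then show ?thesis using continuous_closed_preimage[OF g_cont _ that] by simp
qed

lemma vhat_maximizer:
  shows "vhat \<Delta> g \<in> {0..\<Delta>}" and "g (vhat \<Delta> g) = g \<Delta>"
    and "\<And>y. y \<in> {0..\<Delta>} \<Longrightarrow> g y = g \<Delta> \<Longrightarrow> vhat \<Delta> g \<le> y"
proof -
  have le_max: "g u \<le> g \<Delta>" if "u \<in> {0..\<Delta>}" for u
    using that \<Delta>_nonneg by (auto intro: mono_onD[OF g_mono])
  let ?P = "\<lambda>v. v \<in> {0..\<Delta>} \<and> (\<forall>u\<in>{0..\<Delta>}. g u \<le> g v)"
  have P_iff: "?P v \<longleftrightarrow> v \<in> {0..\<Delta>} \<and> g v \<in> {g \<Delta>..}" for v
  proof
    show "?P v \<Longrightarrow> v \<in> {0..\<Delta>} \<and> g v \<in> {g \<Delta>..}" using \<Delta>_nonneg by simp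
    show "v \<in> {0..\<Delta>} \<and> g v \<in> {g \<Delta>..} \<Longrightarrow> ?P v"
      using le_max by (meson atLeast_iff order_trans)
  qed
  have closed_P: "closed {v. ?P v}" unfolding P_iff by (rule closed_level_set) simp
  have P_\<Delta>: "?P \<Delta>" using le_max \<Delta>_nonneg by auto
  have bdd_P: "bdd_below {v. ?P v}" by (auto intro: bdd_belowI[of _ 0])
  note closed_Least[of ?P, OF closed_P P_\<Delta> bdd_P, folded vhat_def]
  then show "vhat \<Delta> g \<in> {0..\<Delta>}" "g (vhat \<Delta> g) = g \<Delta>"
    "\<And>y. y \<in> {0..\<Delta>} \<Longrightarrow> g y = g \<Delta> \<Longrightarrow> vhat \<Delta> g \<le> y"
    using P_iff le_max by (auto intro: antisym)
qed

lemma Least_level_le_vhat: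
  assumes "g 0 \<le> \<tau>" and "\<tau> \<le> g \<Delta>"
  defines "v \<equiv> LEAST v. v \<in> {0..\<Delta>} \<and> g v = \<tau>"
  shows "v \<in> {0..\<Delta>}" and "g v = \<tau>" and "v \<le> vhat \<Delta> g"
proof -
  let ?P = "\<lambda>v. v \<in> {0..\<Delta>} \<and> g v = \<tau>"
  obtain a where P_a: "?P a" using IVT'[of g 0 \<tau> \<Delta>] assms \<Delta>_nonneg g_cont by auto
  have closed_P: "closed {v. ?P v}" using closed_level_set[of "{\<tau>}"] by simp
  have bdd_P: "bdd_below {v. ?P v}" by (auto intro: bdd_belowI[of _ 0])
  note closed_Least[of ?P, OF closed_P P_a bdd_P, folded v_def]
  then have v: "?P v" and v_least: "\<And>y. ?P y \<Longrightarrow> v \<le> y" by blast+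
  then show "v \<in> {0..\<Delta>}" "g v = \<tau>" by auto
  show "v \<le> vhat \<Delta> g"
  proof (rule ccontr)
    assume "\<not> v \<le> vhat \<Delta> g"
    \<comment> \<open>then g is constant between vhat and v, so vhat is an earlier preimage of \<tau>\<close>
    then have "g (vhat \<Delta> g) \<le> g v"
      using v vhat_maximizer(1) by (auto intro: mono_onD[OF g_mono])
    then have "g (vhat \<Delta> g) = \<tau>"
      using v vhat_maximizer(2) assms(3) \<open>\<tau> \<le> g \<Delta>\<close> by linarith
    then show False using v_least[of "vhat \<Delta> g"] vhat_maximizer(1) \<open>\<not> v \<le> vhat \<Delta> g\<close> by simp
  qed
qed

lemma vhat_pos_imp_value_pos:
  assumes "g 0 = 0" and "0 < vhat \<Delta> g"
  shows "0 < g (vhat \<Delta> g)"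
proof -
  have "g 0 \<le> g (vhat \<Delta> g)"
    using vhat_maximizer(1) \<Delta>_nonneg by (auto intro: mono_onD[OF g_mono])
  moreover have "g (vhat \<Delta> g) \<noteq> g 0"
    using vhat_maximizer(2) vhat_maximizer(3)[of 0] \<Delta>_nonneg assms(2) by auto
  ultimately show ?thesis using assms(1) by simp
qed

end

lemma concave_chord_below:
  fixes g :: "real \<Rightarrow> real"
  assumes "concave_on {0..\<Delta>} g" and "g 0 = 0" and "0 \<le> v" and "v \<le> w" and "w \<le> \<Delta>" and "0 < w"
  shows "v / w * g w \<le> g v"
proof -
  have "(1 - v / w) * g 0 + v / w * g w \<le> g ((1 - v / w) *\<^sub>R 0 + (v / w) *\<^sub>R w)"
    by (rule concave_onD[OF assms(1)]) (use assms in auto)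
  then show ?thesis using assms(2,6) by simp
qed

lemma le_c_const_mul_ratio:
  assumes g: "inG \<Delta> m M g" and "0 < m" and "0 < \<Delta>"
    and v: "v \<in> {0..\<Delta>}" "v \<le> vhat \<Delta> g"
  shows "ereal v \<le> c_const \<Delta> m M * ereal (g v / dg0 \<Delta> g)"
proof (cases "v = 0")
  case True
  then show ?thesis using g by (simp add: inG_def zero_ereal_def[symmetric])
next
  case False
  let ?vh = "vhat \<Delta> g" and ?p = "dg0 \<Delta> g"
  have g_props: "concave_on {0..\<Delta>} g" "mono_on {0..\<Delta>} g" "continuous_on {0..\<Delta>} g"
    "g 0 = 0" "?p \<ge> m"
    using g by (auto simp: inG_def intro: differentiable_imp_continuous_on)
  have "0 < v" using False v by simp
  then have vh_pos: "0 < ?vh" using v by simp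
  have gvh_pos: "0 < g ?vh"
    using vhat_pos_imp_value_pos[OF _ g_props(3,2,4) vh_pos] \<open>0 < \<Delta>\<close> by simp
  have chord: "v / ?vh * g ?vh \<le> g v"
    using concave_chord_below[OF g_props(1,4)] v vh_pos
      vhat_maximizer(1)[OF _ g_props(3,2)] \<open>0 < \<Delta>\<close> by simp
  moreover have "0 < v / ?vh * g ?vh" using \<open>0 < v\<close> vh_pos gvh_pos by simp
  ultimately have gv_pos: "0 < g v" by linarith
  have "ereal v \<le> ereal (?p / (g ?vh / ?vh)) * ereal (g v / ?p)"
    using chord vh_pos gvh_pos g_props(5) \<open>0 < m\<close> by (simp add: field_simps)
  also have "\<dots> \<le> c_const \<Delta> m M * ereal (g v / ?p)"
  proof (rule ereal_mult_right_mono)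
    show "ereal (?p / (g ?vh / ?vh)) \<le> c_const \<Delta> m M"
      unfolding c_const_def using g by (intro SUP_upper) auto
    show "0 \<le> ereal (g v / ?p)"
      using gv_pos g_props(5) \<open>0 < m\<close> by simp
  qed
  finally show ?thesis by simp
qed

theorem lemma9:
  fixes \<Delta> m M \<pi> :: real and gs :: "(real \<Rightarrow> real) list" and t :: nat
  assumes "\<Delta> > 0" and "0 < m" and "m \<le> M" and "\<pi> \<ge> 1"
    and "gs \<noteq> []" and "\<forall>g\<in>set gs. inG \<Delta> m M g"
    and "1 \<le> t" and "t \<le> length gs"
  shows "ereal (cr_pursuit \<Delta> \<pi> gs t)
           \<le> c_const \<Delta> m M * ereal ((gs ! (t - 1)) (cr_pursuit \<Delta> \<pi> gs t) / dg0 \<Delta> (gs ! (t - 1)))"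
proof -
  define g where "g = gs ! (t - 1)"
  define d where "d = eta_opt \<Delta> (take t gs) - eta_opt \<Delta> (take (t - 1) gs)"
  have g: "inG \<Delta> m M g" using assms(6-8) by (simp add: g_def)
  then have g_cont: "continuous_on {0..\<Delta>} g" and g_mono: "mono_on {0..\<Delta>} g" and "g 0 = 0"
    by (auto simp: inG_def intro: differentiable_imp_continuous_on)
  have take_t: "take t gs = take (t - 1) gs @ [g]"
    using assms(7,8) take_Suc_conv_app_nth[of "t - 1" gs] by (simp add: g_def)
  have "\<forall>h\<in>set (take t gs). mono_on {0..\<Delta>} h"
    using assms(6) by (auto simp: inG_def dest: in_set_takeD)
  then have "\<forall>h\<in>set (take (t - 1) gs @ [g]). mono_on {0..\<Delta>} h" by (simp only: take_t)
  then have "0 \<le> d" "d \<le> g \<Delta>"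
    using eta_opt_snoc_bounds[of \<Delta> "take (t - 1) gs" g] assms(1) \<open>g 0 = 0\<close>
    by (simp_all add: d_def take_t)
  moreover have "d / \<pi> \<le> d" using \<open>0 \<le> d\<close> assms(4) mult_left_mono[of 1 \<pi> d] by (simp add: divide_le_eq)
  ultimately have level: "g 0 \<le> d / \<pi>" "d / \<pi> \<le> g \<Delta>"
    using \<open>g 0 = 0\<close> assms(4) by auto
  define v where "v = cr_pursuit \<Delta> \<pi> gs t"
  have "v = (LEAST v. v \<in> {0..\<Delta>} \<and> g v = d / \<pi>)"
    by (simp add: v_def cr_pursuit_def g_def d_def)
  then have "v \<in> {0..\<Delta>}" "v \<le> vhat \<Delta> g"
    using Least_level_le_vhat(1,3)[OF _ g_cont g_mono level] assms(1) by auto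
  from le_c_const_mul_ratio[OF g assms(2,1) this] show ?thesis
    unfolding v_def g_def .
qed

end
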